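(* Let $S_3=\langle x,y\mid x^2=e,\ y^2=e,\ (xy)^3=e\rangle$ and $\Delta=\{x,y,z\}$ with $z=xyx$. Then $W=W_xU_x+W_yU_y+W_zU_z$ is a homogeneous scalar quantum walk on $C_\Delta(S_3)$ whenever, for real $\phi_1,\phi_2$, $W_x=\tfrac13(1+e^{i\phi_1}+e^{i\phi_2})$, $W_y=\tfrac13(1+e^{2\pi i/3}e^{i\phi_1}+e^{-2\pi i/3}e^{i\phi_2})$, $W_z=\tfrac13(1+e^{-2\pi i/3}e^{i\phi_1}+e^{2\pi i/3}e^{i\phi_2})$ and these values are nonzero; in particular $C_\Delta(S_3)$ admits a homogeneous scalar quantum walk.
   Context: The Cayley graph $C_\Delta(\Gamma)$ has vertex set $\Gamma$ and directed edges $(g,g\delta)$, $g\in\Gamma,\delta\in\Delta$. Let $\ell^2(\Gamma)$ have orthonormal basis $\{|g\rangle\}_{g\in\Gamma}$ and for $\delta\in\Gamma$ let $U_\delta|g\rangle=|g\delta\rangle$. A homogeneous scalar quantum walk on $C_\Delta(\Gamma)$ is a unitary operator $W=\sum_{\delta\in\Delta}W_\delta U_\delta$ with all complex coefficients $W_\delta$ nonzero. *)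

theory Defs
  imports Complex_Main "HOL-Algebra.Sym_Groups"
begin

text \<open>Finite groups only: ell^2 of a finite group is the space of all complex
  functions on its carrier (extended by 0 outside the carrier).\<close>

definition l2 :: "('g, 'b) monoid_scheme \<Rightarrow> ('g \<Rightarrow> complex) set" where
  "l2 G = {\<psi>. \<forall>g. g \<notin> carrier G \<longrightarrow> \<psi> g = 0}"

definition l2_inner :: "('g, 'b) monoid_scheme \<Rightarrow> ('g \<Rightarrow> complex) \<Rightarrow> ('g \<Rightarrow> complex) \<Rightarrow> complex" where
  "l2_inner G \<psi> \<phi> = (\<Sum>g\<in>carrier G. cnj (\<psi> g) * \<phi> g)"

text \<open>Right translation U_d with U_d |g> = |g d>, i.e. (U_d psi)(h) = psi(h d^-1).\<close>
definition shift_op :: "('g, 'b) monoid_scheme \<Rightarrow> 'g \<Rightarrow> ('g \<Rightarrow> complex) \<Rightarrow> ('g \<Rightarrow> complex)" where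
  "shift_op G d \<psi> = (\<lambda>h. if h \<in> carrier G then \<psi> (h \<otimes>\<^bsub>G\<^esub> inv\<^bsub>G\<^esub> d) else 0)"

definition walk_op :: "('g, 'b) monoid_scheme \<Rightarrow> 'g set \<Rightarrow> ('g \<Rightarrow> complex) \<Rightarrow> ('g \<Rightarrow> complex) \<Rightarrow> ('g \<Rightarrow> complex)" where
  "walk_op G \<Delta> c \<psi> = (\<lambda>h. \<Sum>d\<in>\<Delta>. c d * shift_op G d \<psi> h)"

definition unitary_on :: "('g, 'b) monoid_scheme \<Rightarrow> (('g \<Rightarrow> complex) \<Rightarrow> ('g \<Rightarrow> complex)) \<Rightarrow> bool" where
  "unitary_on G T \<longleftrightarrow> bij_betw T (l2 G) (l2 G) \<and>
     (\<forall>\<psi>\<in>l2 G. \<forall>\<phi>\<in>l2 G. l2_inner G (T \<psi>) (T \<phi>) = l2_inner G \<psi> \<phi>)"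

definition hom_scalar_qw :: "('g, 'b) monoid_scheme \<Rightarrow> 'g set \<Rightarrow> ('g \<Rightarrow> complex) \<Rightarrow> bool" where
  "hom_scalar_qw G \<Delta> c \<longleftrightarrow> \<Delta> \<subseteq> carrier G \<and> (\<forall>d\<in>\<Delta>. c d \<noteq> 0) \<and> unitary_on G (walk_op G \<Delta> c)"

end

theory Submission
  imports Defs
begin

text \<open>The elements x, y, z of S3 are reflections with xy = yz = zx =: r and
  yx = zy = xz = r^-1. Hence the adjoint of W = sum c_d U_d is the walk with coefficients
  cnj c_d, and the product of two such walks is a combination of 1, U_r and U_(r^-1) only.
  So W is unitary as soon as sum |c_d|^2 = 1 and cnj c_x c_y + cnj c_y c_z + cnj c_z c_x = 0.
  The given coefficients are the discrete Fourier transform of (1, exp(i phi1), exp(i phi2))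
  at the cube roots of unity, and both conditions follow from 1 + \<omega> + \<omega>^2 = 0.\<close>

lemma unitary_onI_adjoint_inverse:
  assumes "\<And>\<psi>. \<psi> \<in> l2 G \<Longrightarrow> T \<psi> \<in> l2 G" "\<And>\<psi>. \<psi> \<in> l2 G \<Longrightarrow> V \<psi> \<in> l2 G"
    and "\<And>\<psi>. \<psi> \<in> l2 G \<Longrightarrow> V (T \<psi>) = \<psi>" "\<And>\<psi>. \<psi> \<in> l2 G \<Longrightarrow> T (V \<psi>) = \<psi>"
    and "\<And>\<psi> \<phi>. \<psi> \<in> l2 G \<Longrightarrow> \<phi> \<in> l2 G \<Longrightarrow> l2_inner G (T \<psi>) \<phi> = l2_inner G \<psi> (V \<phi>)"
  shows "unitary_on G T"
  unfolding unitary_on_def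
proof
  show "bij_betw T (l2 G) (l2 G)"
    by (rule bij_betw_byWitness[where f' = V]) (use assms in auto)
  show "\<forall>\<psi>\<in>l2 G. \<forall>\<phi>\<in>l2 G. l2_inner G (T \<psi>) (T \<phi>) = l2_inner G \<psi> \<phi>"
    using assms by simp
qed

lemma walk_op_in_l2: "walk_op G \<Delta> c \<psi> \<in> l2 G"
  unfolding l2_def walk_op_def shift_op_def by simp

lemma (in group) l2_inner_shift_op:
  assumes "d \<in> carrier G"
  shows "l2_inner G (shift_op G d \<psi>) \<phi> = l2_inner G \<psi> (shift_op G (inv d) \<phi>)"
proof -
  have "bij_betw (\<lambda>g. g \<otimes> d) (carrier G) (carrier G)"
    by (rule bij_betw_byWitness[where f' = "\<lambda>g. g \<otimes> inv d"])
      (use assms in \<open>simp_all add: m_assoc image_subset_iff\<close>)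
  from sum.reindex_bij_betw[OF this, of "\<lambda>h. cnj (shift_op G d \<psi> h) * \<phi> h"]
  have "l2_inner G (shift_op G d \<psi>) \<phi> = (\<Sum>g\<in>carrier G. cnj (\<psi> (g \<otimes> d \<otimes> inv d)) * \<phi> (g \<otimes> d))"
    unfolding l2_inner_def shift_op_def using assms by simp
  also have "\<dots> = l2_inner G \<psi> (shift_op G (inv d) \<phi>)"
    unfolding l2_inner_def shift_op_def using assms by (intro sum.cong) (auto simp: m_assoc)
  finally show ?thesis .
qed

lemma (in group) l2_inner_walk_op:
  assumes "\<Delta> \<subseteq> carrier G"
  shows "l2_inner G (walk_op G \<Delta> c \<psi>) \<phi> =
    l2_inner G \<psi> (\<lambda>h. \<Sum>d\<in>\<Delta>. cnj (c d) * shift_op G (inv d) \<phi> h)"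
proof -
  have "l2_inner G (walk_op G \<Delta> c \<psi>) \<phi> = (\<Sum>d\<in>\<Delta>. cnj (c d) * l2_inner G (shift_op G d \<psi>) \<phi>)"
    unfolding l2_inner_def walk_op_def
    by (simp add: sum_distrib_left sum_distrib_right mult.assoc sum.swap[where A = "carrier G"])
  also have "\<dots> = (\<Sum>d\<in>\<Delta>. cnj (c d) * l2_inner G \<psi> (shift_op G (inv d) \<phi>))"
    using assms by (intro sum.cong) (auto simp: l2_inner_shift_op)
  also have "\<dots> = l2_inner G \<psi> (\<lambda>h. \<Sum>d\<in>\<Delta>. cnj (c d) * shift_op G (inv d) \<phi> h)"
    unfolding l2_inner_def
    by (simp add: sum_distrib_left sum_distrib_right mult_ac sum.swap[where A = \<Delta>])
  finally show ?thesis .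
qed

locale triangle_reflections = group +
  fixes x y z
  assumes distinct: "distinct [x, y, z]"
    and in_carrier: "x \<in> carrier G" "y \<in> carrier G" "z \<in> carrier G"
    and involutive: "x \<otimes> x = \<one>" "y \<otimes> y = \<one>" "z \<otimes> z = \<one>"
    and rotation: "x \<otimes> y = y \<otimes> z" "z \<otimes> x = y \<otimes> z"
begin

lemma inv_reflection: "d \<in> {x, y, z} \<Longrightarrow> inv d = d"
  using in_carrier involutive inv_equality by blast

lemma inverse_rotation: "y \<otimes> x = z \<otimes> y" "x \<otimes> z = z \<otimes> y"
proof -
  have "inv (x \<otimes> y) = inv (y \<otimes> z)" "inv (z \<otimes> x) = inv (y \<otimes> z)"
    using rotation by simp_all
  then show "y \<otimes> x = z \<otimes> y" "x \<otimes> z = z \<otimes> y"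
    using in_carrier by (simp_all add: inv_mult_group inv_reflection)
qed

lemma walk_op_reflections:
  "walk_op G {x, y, z} c \<psi> h = (if h \<in> carrier G
     then c x * \<psi> (h \<otimes> x) + c y * \<psi> (h \<otimes> y) + c z * \<psi> (h \<otimes> z) else 0)"
  using distinct unfolding walk_op_def shift_op_def by (simp add: inv_reflection algebra_simps)

lemma l2_inner_walk_op_reflections:
  "l2_inner G (walk_op G {x, y, z} c \<psi>) \<phi> = l2_inner G \<psi> (walk_op G {x, y, z} (\<lambda>d. cnj (c d)) \<phi>)"
proof -
  have "(\<lambda>h. \<Sum>d\<in>{x, y, z}. cnj (c d) * shift_op G (inv d) \<phi> h) = walk_op G {x, y, z} (\<lambda>d. cnj (c d)) \<phi>"
    unfolding walk_op_def by (intro ext sum.cong) (simp_all add: inv_reflection)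
  then show ?thesis
    using l2_inner_walk_op[of "{x, y, z}"] in_carrier by simp
qed

lemma walk_op_walk_op_reflections:
  assumes "h \<in> carrier G"
  shows "walk_op G {x, y, z} a (walk_op G {x, y, z} b \<psi>) h =
      (a x * b x + a y * b y + a z * b z) * \<psi> h
    + (a x * b y + a y * b z + a z * b x) * \<psi> (h \<otimes> (x \<otimes> y))
    + (a y * b x + a z * b y + a x * b z) * \<psi> (h \<otimes> (y \<otimes> x))"
proof -
  have square: "h \<otimes> d \<otimes> d = h" if "d \<in> {x, y, z}" for d
    using that assms in_carrier involutive by (auto simp: m_assoc)
  have products: "h \<otimes> x \<otimes> y = h \<otimes> (x \<otimes> y)" "h \<otimes> y \<otimes> z = h \<otimes> (x \<otimes> y)"
      "h \<otimes> z \<otimes> x = h \<otimes> (x \<otimes> y)" "h \<otimes> y \<otimes> x = h \<otimes> (y \<otimes> x)"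
      "h \<otimes> z \<otimes> y = h \<otimes> (y \<otimes> x)" "h \<otimes> x \<otimes> z = h \<otimes> (y \<otimes> x)"
    using assms in_carrier rotation inverse_rotation by (auto simp: m_assoc)
  show ?thesis
    using assms in_carrier square products by (simp add: walk_op_reflections algebra_simps)
qed

lemma walk_op_reflections_inverse:
  assumes "\<psi> \<in> l2 G"
    and "a x * b x + a y * b y + a z * b z = 1"
    and "a x * b y + a y * b z + a z * b x = 0" "a y * b x + a z * b y + a x * b z = 0"
  shows "walk_op G {x, y, z} a (walk_op G {x, y, z} b \<psi>) = \<psi>"
proof
  fix h
  show "walk_op G {x, y, z} a (walk_op G {x, y, z} b \<psi>) h = \<psi> h"
  proof (cases "h \<in> carrier G")
    case True
    then show ?thesis
      using assms by (simp add: walk_op_walk_op_reflections)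
  next
    case False
    then show ?thesis
      using assms by (simp add: walk_op_reflections l2_def)
  qed
qed

theorem unitary_walk_op_reflections:
  assumes norm: "cnj (c x) * c x + cnj (c y) * c y + cnj (c z) * c z = 1"
    and orth: "cnj (c x) * c y + cnj (c y) * c z + cnj (c z) * c x = 0"
  shows "unitary_on G (walk_op G {x, y, z} c)"
proof (rule unitary_onI_adjoint_inverse)
  have orth': "c x * cnj (c y) + c y * cnj (c z) + c z * cnj (c x) = 0"
    using arg_cong[OF orth, of cnj] by (simp add: algebra_simps)
  fix \<psi> assume "\<psi> \<in> l2 G"
  then show "walk_op G {x, y, z} (\<lambda>d. cnj (c d)) (walk_op G {x, y, z} c \<psi>) = \<psi>"
      "walk_op G {x, y, z} c (walk_op G {x, y, z} (\<lambda>d. cnj (c d)) \<psi>) = \<psi>"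
    using norm orth orth' by (auto intro!: walk_op_reflections_inverse simp: algebra_simps)
qed (simp_all add: walk_op_in_l2 l2_inner_walk_op_reflections)

end

lemma sym_group_3_transpose_conj:
  "transpose 1 2 \<otimes>\<^bsub>sym_group 3\<^esub> transpose 2 3 \<otimes>\<^bsub>sym_group 3\<^esub> transpose 1 2 = transpose (1::nat) 3"
  unfolding sym_group_mult by (rule ext) (simp add: transpose_def)

lemma triangle_reflections_sym_group_3:
  "triangle_reflections (sym_group 3) (transpose 1 2) (transpose 2 3) (transpose (1::nat) 3)"
proof (intro triangle_reflections.intro triangle_reflections_axioms.intro sym_group_is_group)
  show "distinct [transpose 1 2, transpose 2 3, transpose (1::nat) 3]"
    by (auto dest!: fun_cong[where x = 1] simp: transpose_def)
qed (auto simp: sym_group_carrier sym_group_mult sym_group_one transpose_def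
    intro!: permutes_swap_id ext)

lemma exp_cube_root_unity:
  defines "\<omega> \<equiv> exp (2 * pi * \<i> / 3)"
  shows "exp (- 2 * pi * \<i> / 3) = \<omega>\<^sup>2" "cnj \<omega> = \<omega>\<^sup>2" "1 + \<omega> + \<omega>\<^sup>2 = 0"
proof -
  have e: "exp (t * pi * \<i> / 3) = Complex (cos (t * pi / 3)) (sin (t * pi / 3))" for t :: real
    by (simp add: exp_eq_polar cis.ctr mult.commute)
  have w: "\<omega> = Complex (-1/2) (sqrt 3 / 2)"
    using e[of 2] by (simp add: \<omega>_def cos_120 sin_120)
  have sq: "\<omega>\<^sup>2 = Complex (-1/2) (- sqrt 3 / 2)"
    by (simp add: w power2_eq_square complex_eq_iff)
  show "exp (- 2 * pi * \<i> / 3) = \<omega>\<^sup>2"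
    using e[of "-2"] by (simp add: sq cos_120 sin_120)
  show "cnj \<omega> = \<omega>\<^sup>2" "1 + \<omega> + \<omega>\<^sup>2 = 0"
    unfolding sq by (simp_all add: w complex_eq_iff)
qed

lemma cube_root_dft_coeffs:
  fixes \<omega> u v cx cy cz :: complex
  assumes \<omega>: "1 + \<omega> + \<omega>\<^sup>2 = 0" "cnj \<omega> = \<omega>\<^sup>2"
    and unit: "u * cnj u = 1" "v * cnj v = 1"
    and coeffs: "cx = (1 + u + v) / 3" "cy = (1 + \<omega> * u + \<omega>\<^sup>2 * v) / 3"
      "cz = (1 + \<omega>\<^sup>2 * u + \<omega> * v) / 3"
  shows "cnj cx * cx + cnj cy * cy + cnj cz * cz = 1"
    and "cnj cx * cy + cnj cy * cz + cnj cz * cx = 0"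
proof -
  have "\<omega> ^ 3 = 1"
    using \<omega>(1) by algebra
  then have "cnj (\<omega>\<^sup>2) = \<omega>"
    by (simp add: \<omega>(2) flip: power_mult) (metis power3_eq_cube power4_eq_xxxx mult_1_left)
  then have cnj_coeffs: "cnj cx = (1 + cnj u + cnj v) / 3"
      "cnj cy = (1 + \<omega>\<^sup>2 * cnj u + \<omega> * cnj v) / 3" "cnj cz = (1 + \<omega> * cnj u + \<omega>\<^sup>2 * cnj v) / 3"
    unfolding coeffs by (simp_all add: \<omega>(2))
  show "cnj cx * cx + cnj cy * cy + cnj cz * cz = 1" "cnj cx * cy + cnj cy * cz + cnj cz * cx = 0"
    unfolding cnj_coeffs unfolding coeffs using \<omega>(1) unit by (simp_all add: field_simps) algebra+
qed

lemma exp_imaginary_times_cnj: "exp (\<i> * of_real t) * cnj (exp (\<i> * of_real t)) = 1"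
  by (simp flip: complex_norm_square)

theorem mainTheorem8:
  fixes \<phi>1 \<phi>2 :: real and c :: "(nat \<Rightarrow> nat) \<Rightarrow> complex"
  defines "S3 \<equiv> sym_group 3"
      and "x \<equiv> transpose (1::nat) 2"
      and "y \<equiv> transpose (2::nat) 3"
  defines "z \<equiv> x \<otimes>\<^bsub>S3\<^esub> y \<otimes>\<^bsub>S3\<^esub> x"
  assumes "c x = (1 + exp (\<i> * \<phi>1) + exp (\<i> * \<phi>2)) / 3"
      and "c y = (1 + exp (2 * pi * \<i> / 3) * exp (\<i> * \<phi>1) + exp (- 2 * pi * \<i> / 3) * exp (\<i> * \<phi>2)) / 3"
      and "c z = (1 + exp (- 2 * pi * \<i> / 3) * exp (\<i> * \<phi>1) + exp (2 * pi * \<i> / 3) * exp (\<i> * \<phi>2)) / 3"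
      and "c x \<noteq> 0" and "c y \<noteq> 0" and "c z \<noteq> 0"
  shows "hom_scalar_qw S3 {x, y, z} c \<and> (\<exists>c'. hom_scalar_qw S3 {x, y, z} c')"
proof -
  have "z = transpose 1 3"
    unfolding z_def S3_def x_def y_def by (rule sym_group_3_transpose_conj)
  then interpret triangle_reflections S3 x y z
    unfolding S3_def x_def y_def using triangle_reflections_sym_group_3 by simp
  define \<omega> where "\<omega> = exp (2 * pi * \<i> / 3)"
  note \<omega> = exp_cube_root_unity[folded \<omega>_def]
  have "c y = (1 + \<omega> * exp (\<i> * \<phi>1) + \<omega>\<^sup>2 * exp (\<i> * \<phi>2)) / 3"
    and "c z = (1 + \<omega>\<^sup>2 * exp (\<i> * \<phi>1) + \<omega> * exp (\<i> * \<phi>2)) / 3"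
    using assms(6,7) by (simp_all only: \<omega>(1) flip: \<omega>_def)
  with assms(5) have "unitary_on S3 (walk_op S3 {x, y, z} c)"
    by (intro unitary_walk_op_reflections
        cube_root_dft_coeffs[OF \<omega>(3,2) exp_imaginary_times_cnj exp_imaginary_times_cnj])
  then have "hom_scalar_qw S3 {x, y, z} c"
    unfolding hom_scalar_qw_def using in_carrier assms(8-10) by simp
  then show ?thesis by blast
qed

end
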